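(* Let $B:\mathbb{N}\to(0,\infty)$ and let $(p_N)_{N\in\mathbb{N}}$ be a sequence of monic univariate complex polynomials, $p_N$ of degree $N$, with $\mu_{\rm norm}(p_N)\le B(N)$ for all $N$. Let $\omega_N=\{x_1,\dots,x_N\}\subset\mathbb{S}^2$ be the points with $\pi_{\mathbb{S}^2}(x_i)=z_i$, $z_1,\dots,z_N$ the roots of $p_N$. Then $$\mathcal{E}_{\log}(\omega_N)\le \kappa N^2-N\log\Big(\frac{\sqrt{N(N+1)}}{2}\Big)+N\log B(N),$$ where $\kappa=\frac12-\log 2$.
   Context: $\mathbb{S}^2\subset\mathbb{R}^3$ is the unit sphere; $\pi_{\mathbb{S}^2}(a,b,c)=\frac{a+ib}{1-c}$ is the stereographic projection from the North pole. $\mathcal{E}_{\log}(\{x_1,\dots,x_N\})=-\sum_{i\ne j}\log\|x_i-x_j\|$. Bombieri–Weyl norm: $\|\sum_{i=0}^N a_iz^i\|=(\sum_i\binom{N}{i}^{-1}|a_i|^2)^{1/2}$. For a root $z$ of a degree-$N$ polynomial $P$, $\mu_{\rm norm}(P,z)=N^{1/2}\|P\|(1+|z|^2)^{N/2-1}/|P'(z)|$ ($=\infty$ at multiple roots) and $\mu_{\rm norm}(P)=\max_{P(z)=0}\mu_{\rm norm}(P,z)$. Note $\kappa=\int\int\log|x-y|^{-1}d\sigma(x)d\sigma(y)$ with $\sigma$ the normalized surface measure on $\mathbb{S}^2$. *)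

theory Defs
  imports "HOL-Analysis.Analysis" "HOL-Computational_Algebra.Polynomial" "HOL-Library.Extended_Real"
begin

definition stereo :: "real^3 \<Rightarrow> complex" where
  "stereo x = Complex (x$1) (x$2) / complex_of_real (1 - x$3)"

definition north_pole :: "real^3" where
  "north_pole = vector [0, 0, 1]"

definition log_energy :: "(real^3) set \<Rightarrow> real" where
  "log_energy \<omega> = - (\<Sum>(x,y)\<in>{(x,y). x \<in> \<omega> \<and> y \<in> \<omega> \<and> x \<noteq> y}. ln (norm (x - y)))"

definition bw_norm :: "complex poly \<Rightarrow> real" where
  "bw_norm P = sqrt (\<Sum>i\<le>degree P. (cmod (coeff P i))^2 / real (degree P choose i))"

definition mu_norm_at :: "complex poly \<Rightarrow> complex \<Rightarrow> ereal" where
  "mu_norm_at P z = (if poly (pderiv P) z = 0 then \<infinity> else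
     ereal (sqrt (real (degree P)) * bw_norm P * (1 + (cmod z)^2) powr (real (degree P) / 2 - 1)
            / cmod (poly (pderiv P) z)))"

definition mu_norm :: "complex poly \<Rightarrow> ereal" where
  "mu_norm P = (SUP z\<in>{z. poly P z = 0}. mu_norm_at P z)"

end

theory Submission
  imports Defs "HOL-Complex_Analysis.Complex_Analysis" "HOL-Computational_Algebra.Fundamental_Theorem_Algebra"
begin

text \<open>Lift the roots \<open>z\<^sub>i\<close> of \<open>P = p N\<close> to the sphere. The chordal distance formula
  \<open>|x\<^sub>i - x\<^sub>j|\<^sup>2 = 4 |z\<^sub>i - z\<^sub>j|\<^sup>2 / ((1 + |z\<^sub>i|\<^sup>2) (1 + |z\<^sub>j|\<^sup>2))\<close> turns the energy into
  \<open>(N - 1) \<Sum> ln (1 + |z\<^sub>i|\<^sup>2) - \<Sum> ln |P'(z\<^sub>i)| - N (N - 1) ln 2\<close>. The bound on the condition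
  number controls \<open>-\<Sum> ln |P'(z\<^sub>i)|\<close> by \<open>N ln B - N ln (\<surd>N \<parallel>P\<parallel>) - (N/2 - 1) \<Sum> ln (1 + |z\<^sub>i|\<^sup>2)\<close>.
  The remaining sum is bounded by averaging over the unit sphere of \<open>\<complex>\<^sup>2\<close>, parametrized by
  \<open>(\<surd>t e(s), \<surd>(1 - t))\<close> with \<open>e(s) = exp (2\<pi>i s)\<close>: by Jensen's formula on circles the average of \<open>ln |x - z y|\<^sup>2\<close> is
  \<open>ln (1 + |z|\<^sup>2) - 1\<close>, while by Parseval's identity and Beta integrals the average of \<open>|P(x, y)|\<^sup>2\<close>
  for the homogenized \<open>P\<close> is \<open>\<parallel>P\<parallel>\<^sup>2 / (N + 1)\<close>. Concavity of \<open>ln\<close> gives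
  \<open>\<Sum> (ln (1 + |z\<^sub>i|\<^sup>2) - 1) \<le> ln (\<parallel>P\<parallel>\<^sup>2 / (N + 1))\<close>, and the three estimates combine to the claim.\<close>

definition circ :: "real \<Rightarrow> complex" where
  "circ s = exp (2 * of_real pi * \<i> * of_real s)"

lemma circ_nonzero: "circ s \<noteq> 0"
  by (simp add: circ_def)

lemma norm_circ [simp]: "cmod (circ s) = 1"
  by (simp add: circ_def)

lemma circ_mult_cnj: "circ s * cnj (circ s) = 1"
  by (metis complex_norm_square norm_circ of_real_1 power_one)

lemma continuous_on_circ [continuous_intros]: "continuous_on A circ"
  unfolding circ_def by (intro continuous_intros)

lemma has_integral_holomorphic_circ:
  assumes "f holomorphic_on cball 0 1"
  shows "((\<lambda>s. f (circ s)) has_integral f 0) {0..1}"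
proof -
  have "((\<lambda>w. f w / (w - 0)) has_contour_integral (2 * of_real pi * \<i> * f 0)) (circlepath 0 1)"
    using assms by (rule Cauchy_integral_circlepath_simple) simp
  then have integral: "((\<lambda>s. f (circlepath 0 1 s) / (circlepath 0 1 s - 0) *
      vector_derivative (circlepath 0 1) (at s within {0..1})) has_integral 2 * pi * \<i> * f 0) {0..1}"
    by (simp add: has_contour_integral_def)
  have integrand: "f (circlepath 0 1 s) / (circlepath 0 1 s - 0) *
      vector_derivative (circlepath 0 1) (at s within {0..1}) = (2 * pi * \<i>) * f (circ s)"
    if "s \<in> {0..1}" for s
  proof -
    have "circlepath 0 1 s = circ s"
      by (simp add: circlepath circ_def)
    moreover have "vector_derivative (circlepath 0 1) (at s within {0..1}) = 2 * pi * \<i> * circ s"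
      using that vector_derivative_circlepath01[of s 0 1] by (simp add: circ_def)
    ultimately show ?thesis
      by (simp add: circ_nonzero)
  qed
  have "((\<lambda>s. (2 * pi * \<i>) * f (circ s)) has_integral 2 * pi * \<i> * f 0) {0..1}"
    using has_integral_eq[OF integrand integral] .
  then have "((\<lambda>s. f (circ s)) has_integral (2 * pi * \<i> * f 0) / (2 * pi * \<i>)) {0..1}"
    by (rule has_integral_mult_right_iff[THEN iffD1, rotated]) simp
  then show ?thesis
    by simp
qed

lemma has_integral_ln_norm_one_minus_circ:
  assumes c: "cmod c < 1"
  shows "((\<lambda>s. ln (cmod (1 - c * circ s))) has_integral 0) {0..1}"
proof -
  have Re_pos: "Re (1 - c * w) > 0" if "cmod w \<le> 1" for w
  proof -
    have "cmod (c * w) < 1"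
      using that c by (simp add: norm_mult) (meson le_less_trans mult_left_le norm_ge_zero)
    then show ?thesis
      using complex_Re_le_cmod le_less_trans by fastforce
  qed
  have "(\<lambda>w. Ln (1 - c * w)) holomorphic_on cball 0 1"
  proof (intro holomorphic_intros)
    fix w :: complex
    assume "w \<in> cball 0 1"
    then show "1 - c * w \<notin> \<real>\<^sub>\<le>\<^sub>0"
      using Re_pos[of w] by (auto simp: complex_nonpos_Reals_iff)
  qed
  from has_integral_Re[OF has_integral_holomorphic_circ[OF this]]
  have "((\<lambda>s. Re (Ln (1 - c * circ s))) has_integral 0) {0..1}"
    by simp
  moreover have "Re (Ln (1 - c * circ s)) = ln (cmod (1 - c * circ s))" for s
  proof -
    have "Re (1 - c * circ s) > 0"
      using Re_pos by simp
    then have "1 - c * circ s \<noteq> 0"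
      by (metis less_irrefl zero_complex.sel(1))
    then show ?thesis
      by (simp add: Re_Ln)
  qed
  ultimately show ?thesis
    by simp
qed

lemma has_integral_ln_norm_sq_mult_one_minus_circ:
  assumes "cmod c < 1" "m > 0"
  shows "((\<lambda>s. ln ((m * cmod (1 - c * circ s))\<^sup>2)) has_integral 2 * ln m) {0..1}"
proof -
  have "cmod (1 - c * circ s) > 0" for s
    using assms(1) norm_triangle_ineq2[of 1 "c * circ s"] by (auto simp: norm_mult)
  then have "ln ((m * cmod (1 - c * circ s))\<^sup>2) = 2 * ln m + 2 * ln (cmod (1 - c * circ s))" for s
    using assms(2) by (simp add: ln_realpow ln_mult)
  moreover have "((\<lambda>s. 2 * ln m + 2 * ln (cmod (1 - c * circ s))) has_integral 2 * ln m + 2 * 0) {0..1}"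
    using has_integral_const_real[of "ln m" 0 1]
    by (intro has_integral_add has_integral_mult_right has_integral_ln_norm_one_minus_circ assms) simp_all
  ultimately show ?thesis
    by simp
qed

text \<open>Jensen's formula for a linear function: factor out whichever of the two terms dominates.\<close>
lemma has_integral_ln_norm_sq_circ_minus:
  assumes "r \<ge> 0" "r \<noteq> cmod b"
  shows "((\<lambda>s. ln ((cmod (of_real r * circ s - b))\<^sup>2)) has_integral 2 * ln (max r (cmod b))) {0..1}"
proof (cases "r < cmod b")
  case True
  then have "b \<noteq> 0"
    using assms by auto
  have factor: "cmod (of_real r * circ s - b) = cmod b * cmod (1 - (of_real r / b) * circ s)" for s
  proof -
    have "of_real r * circ s - b = - b * (1 - (of_real r / b) * circ s)"
      using \<open>b \<noteq> 0\<close> by (simp add: field_simps)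
    then show ?thesis
      by (simp add: norm_mult)
  qed
  have "cmod (of_real r / b) < 1"
    using True \<open>b \<noteq> 0\<close> assms(1) by (simp add: norm_divide)
  then have "((\<lambda>s. ln ((cmod b * cmod (1 - (of_real r / b) * circ s))\<^sup>2)) has_integral 2 * ln (cmod b)) {0..1}"
    using \<open>b \<noteq> 0\<close> by (intro has_integral_ln_norm_sq_mult_one_minus_circ) auto
  then show ?thesis
    unfolding factor[symmetric] using True by (simp only: max_absorb2 less_imp_le)
next
  case False
  then have "r > cmod b" "r > 0"
    using assms by (auto intro: le_less_trans)
  have factor: "cmod (of_real r * circ s - b) = r * cmod (1 - (cnj b / of_real r) * circ s)" for s
  proof -
    have "of_real r * circ s - b = of_real r * circ s * cnj (1 - (cnj b / of_real r) * circ s)"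
      using \<open>r > 0\<close> circ_mult_cnj[of s] by (simp add: field_simps)
    then show ?thesis
      using \<open>r > 0\<close> by (simp only: norm_mult complex_mod_cnj norm_circ norm_of_real)
  qed
  have "cmod (cnj b / of_real r) < 1"
    using \<open>r > cmod b\<close> \<open>r > 0\<close> by (simp add: norm_divide)
  then have "((\<lambda>s. ln ((r * cmod (1 - (cnj b / of_real r) * circ s))\<^sup>2)) has_integral 2 * ln r) {0..1}"
    using \<open>r > 0\<close> by (intro has_integral_ln_norm_sq_mult_one_minus_circ)
  then show ?thesis
    unfolding factor[symmetric] using \<open>r > cmod b\<close> by (simp only: max_absorb1 less_imp_le)
qed

lemma has_integral_circ_power_mult_cnj_power:
  "((\<lambda>s. circ s ^ k * cnj (circ s) ^ l) has_integral (if k = l then 1 else 0)) {0..1}"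
proof (cases "k = l")
  case True
  then have "circ s ^ k * cnj (circ s) ^ l = 1" for s
    by (simp add: power_mult_distrib[symmetric] circ_mult_cnj)
  then show ?thesis
    using True has_integral_const[of "1::complex" 0 "1::real"] by simp
next
  case False
  define a where "a = 2 * of_real pi * \<i> * (of_int (int k - int l) :: complex)"
  have "a \<noteq> 0"
    using False by (simp add: a_def)
  have "circ s ^ k * cnj (circ s) ^ l = exp (a * of_real s)" for s
    by (simp add: circ_def a_def exp_cnj exp_of_nat_mult[symmetric] exp_add[symmetric] algebra_simps)
  moreover have "exp a = 1"
    using exp_integer_2pi[of "of_int (int k - int l)"] by (simp add: a_def algebra_simps)
  moreover have "(\<lambda>s. exp (a * of_real s)) integrable_on {0..1}"
    by (intro integrable_continuous_interval continuous_intros)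
  ultimately show ?thesis
    using integral_exp[of 1 a] \<open>a \<noteq> 0\<close> False by (simp add: has_integral_integral)
qed

lemma has_integral_norm_sq_sum_circ_power:
  "((\<lambda>s. (cmod (\<Sum>k\<le>n. d k * circ s ^ k))\<^sup>2) has_integral (\<Sum>k\<le>n. (cmod (d k))\<^sup>2)) {0..1}"
proof -
  have expand: "complex_of_real ((cmod (\<Sum>k\<le>n. d k * circ s ^ k))\<^sup>2) =
      (\<Sum>k\<le>n. \<Sum>l\<le>n. (d k * cnj (d l)) * (circ s ^ k * cnj (circ s) ^ l))" for s
    unfolding complex_norm_square by (simp add: sum_product algebra_simps)
  have "((\<lambda>s. \<Sum>k\<le>n. \<Sum>l\<le>n. (d k * cnj (d l)) * (circ s ^ k * cnj (circ s) ^ l)) has_integral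
         (\<Sum>k\<le>n. \<Sum>l\<le>n. (d k * cnj (d l)) * (if k = l then 1 else 0))) {0..1}"
    by (intro has_integral_sum finite_atMost ballI has_integral_mult_right
          has_integral_circ_power_mult_cnj_power)
  also have "(\<Sum>k\<le>n. \<Sum>l\<le>n. (d k * cnj (d l)) * (if k = l then 1 else 0)) = (\<Sum>k\<le>n. d k * cnj (d k))"
    by (simp add: if_distrib cong: if_cong)
  also have "\<dots> = complex_of_real (\<Sum>k\<le>n. (cmod (d k))\<^sup>2)"
    by (simp only: complex_norm_square of_real_sum)
  finally have "((\<lambda>s. complex_of_real ((cmod (\<Sum>k\<le>n. d k * circ s ^ k))\<^sup>2)) has_integral
      complex_of_real (\<Sum>k\<le>n. (cmod (d k))\<^sup>2)) {0..1}"
    by (simp only: expand)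
  from has_integral_Re[OF this] show ?thesis
    by simp
qed

lemma has_integral_ln_max_affine:
  fixes \<sigma> :: real
  assumes "\<sigma> > 0"
  shows "((\<lambda>t. ln (max t (\<sigma> * (1 - t)))) has_integral ln (1 + \<sigma>) - 1) {0..1}"
proof -
  define t0 where "t0 = \<sigma> / (1 + \<sigma>)"
  have t0: "0 < t0" "t0 < 1"
    using assms by (auto simp: t0_def field_simps)
  have integral_left: "((\<lambda>t. ln (\<sigma> * (1 - t))) has_integral
      (t0 * ln \<sigma> - (1 - t0) * ln (1 - t0) - t0) - (0 * ln \<sigma> - (1 - 0) * ln (1 - 0) - 0)) {0..t0}"
    using t0 assms
    by (intro fundamental_theorem_of_calculus)
       (auto intro!: derivative_eq_intros simp: has_real_derivative_iff_has_vector_derivative[symmetric] ln_mult)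
  have "ln (\<sigma> * (1 - t)) = ln (max t (\<sigma> * (1 - t)))" if "t \<in> {0..t0}" for t
    using that assms by (auto simp: t0_def field_simps max_def)
  from has_integral_eq[OF this integral_left] have left: "((\<lambda>t. ln (max t (\<sigma> * (1 - t)))) has_integral
      t0 * ln \<sigma> - (1 - t0) * ln (1 - t0) - t0) {0..t0}"
    by simp
  have integral_right: "((\<lambda>t. ln t) has_integral (1 * ln 1 - 1) - (t0 * ln t0 - t0)) {t0..1}"
    using t0
    by (intro fundamental_theorem_of_calculus)
       (auto intro!: derivative_eq_intros simp: has_real_derivative_iff_has_vector_derivative[symmetric])
  have "ln t = ln (max t (\<sigma> * (1 - t)))" if "t \<in> {t0..1}" for t
  proof -
    have "\<sigma> * (1 - t) \<le> t"
      using that assms by (auto simp: t0_def field_simps)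
    then show ?thesis
      by (simp add: max_absorb1)
  qed
  from has_integral_eq[OF this integral_right]
  have right: "((\<lambda>t. ln (max t (\<sigma> * (1 - t)))) has_integral t0 - t0 * ln t0 - 1) {t0..1}"
    by (simp add: algebra_simps)
  have logs: "ln t0 = ln \<sigma> - ln (1 + \<sigma>)" "ln (1 - t0) = - ln (1 + \<sigma>)"
    using assms by (simp_all add: t0_def ln_div divide_simps)
  have "((\<lambda>t. ln (max t (\<sigma> * (1 - t)))) has_integral
      (t0 * ln \<sigma> - (1 - t0) * ln (1 - t0) - t0) + (t0 - t0 * ln t0 - 1)) {0..1}"
    using t0 by (intro has_integral_combine[OF _ _ left right]) auto
  moreover have "(t0 * ln \<sigma> - (1 - t0) * ln (1 - t0) - t0) + (t0 - t0 * ln t0 - 1) = ln (1 + \<sigma>) - 1"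
    unfolding logs by (simp add: algebra_simps)
  ultimately show ?thesis
    by simp
qed

lemma has_integral_power_mult_one_minus_power:
  "((\<lambda>t::real. t ^ k * (1 - t) ^ m) has_integral fact k * fact m / fact (k + m + 1)) {0..1}"
proof -
  have "((\<lambda>t. t powr (real (k + 1) - 1) * (1 - t) powr (real (m + 1) - 1)) has_integral
      Beta (real (k + 1)) (real (m + 1))) {0..1}"
    by (rule has_integral_Beta_real) auto
  then have "((\<lambda>t::real. t ^ k * (1 - t) ^ m) has_integral Beta (real (k + 1)) (real (m + 1))) {0..1}"
    by (rule has_integral_spike_finite[where S = "{0, 1}", rotated 2]) (auto simp: powr_realpow)
  moreover have "Beta (real (k + 1)) (real (m + 1)) = fact k * fact m / fact (k + m + 1)"
  proof -
    have "Gamma (real n + 1) = fact n" for n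
      using Gamma_fact[of n] by (simp add: add.commute)
    from this[of k] this[of m] this[of "k + m + 1"] show ?thesis
      by (simp add: Beta_def add_ac)
  qed
  ultimately show ?thesis
    by simp
qed

definition homogenize :: "nat \<Rightarrow> 'a::comm_ring_1 poly \<Rightarrow> 'a \<Rightarrow> 'a \<Rightarrow> 'a" where
  "homogenize n q x y = (\<Sum>k\<le>n. coeff q k * x ^ k * y ^ (n - k))"

lemma homogenize_linear_factor_mult:
  assumes "degree q \<le> n"
  shows "homogenize (Suc n) ([:-a, 1:] * q) x y = (x - a * y) * homogenize n q x y"
proof -
  have coeff: "coeff ([:-a, 1:] * q) k = (if k = 0 then 0 else coeff q (k - 1)) - a * coeff q k" for k
    by (cases k) (simp_all add: mult_pCons_left coeff_pCons)
  have "(\<Sum>k\<le>Suc n. (if k = 0 then 0 else coeff q (k - 1)) * x ^ k * y ^ (Suc n - k)) =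
      x * homogenize n q x y"
    by (subst sum.atMost_Suc_shift) (simp add: homogenize_def sum_distrib_left algebra_simps)
  moreover have "(\<Sum>k\<le>Suc n. a * coeff q k * x ^ k * y ^ (Suc n - k)) = a * y * homogenize n q x y"
    using assms
    by (simp add: homogenize_def sum_distrib_left coeff_eq_0 Suc_diff_le algebra_simps)
  ultimately show ?thesis
    unfolding homogenize_def[of "Suc n"] coeff by (simp add: algebra_simps sum_subtractf)
qed

lemma degree_prod_linear_factors:
  "degree (\<Prod>z\<in>R. [:-z, 1:] :: 'a::idom poly) = card R"
  by (cases "finite R") (simp_all add: degree_prod_sum_eq)

lemma prod_linear_forms_eq_homogenize:
  fixes R :: "'a::idom set"
  assumes "finite R"
  shows "(\<Prod>z\<in>R. x - z * y) = homogenize (card R) (\<Prod>z\<in>R. [:-z, 1:]) x y"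
  using assms
proof (induction R rule: finite_induct)
  case empty
  then show ?case
    by (simp add: homogenize_def)
next
  case (insert a R)
  then show ?case
    using homogenize_linear_factor_mult[of "\<Prod>z\<in>R. [:-z, 1:]" "card R" a x y]
    by (simp add: degree_prod_linear_factors)
qed

definition square_integral :: "(real \<Rightarrow> real \<Rightarrow> real) \<Rightarrow> real" where
  "square_integral F = integral {0..1} (\<lambda>t. integral {0..1} (F t))"

definition continuous_on_square :: "(real \<Rightarrow> real \<Rightarrow> real) \<Rightarrow> bool" where
  "continuous_on_square F \<longleftrightarrow> continuous_on ({0..1} \<times> {0..1}) (\<lambda>x. F (fst x) (snd x))"

lemma continuous_on_square_inner_integral:
  "continuous_on_square F \<Longrightarrow> continuous_on {0..1} (\<lambda>t. integral {0..1} (F t))"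
  using integral_continuous_on_param[of "{0..1}" 0 1 F]
  unfolding continuous_on_square_def by (simp add: cbox_interval case_prod_beta')

lemma continuous_on_square_slice:
  assumes "continuous_on_square F" "t \<in> {0..1}"
  shows "continuous_on {0..1} (F t)"
proof -
  have "continuous_on {0..1} (Pair t)"
    by (intro continuous_intros)
  moreover have "Pair t ` {0..1} \<subseteq> {0..1} \<times> {0..1}"
    using assms(2) by auto
  ultimately show ?thesis
    using continuous_on_compose2[OF assms(1)[unfolded continuous_on_square_def], of "{0..1}" "Pair t"]
    by auto
qed

lemma continuous_on_square_integrable:
  assumes "continuous_on_square F"
  shows "t \<in> {0..1} \<Longrightarrow> F t integrable_on {0..1}"
    and "(\<lambda>t. integral {0..1} (F t)) integrable_on {0..1}"
  using integrable_continuous_interval continuous_on_square_slice[OF assms]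
    continuous_on_square_inner_integral[OF assms]
  by blast+

lemma continuous_on_square_affine:
  "continuous_on_square F \<Longrightarrow> continuous_on_square (\<lambda>t s. a + b * F t s)"
  unfolding continuous_on_square_def by (intro continuous_intros)

lemma continuous_on_square_prod:
  "(\<And>i. i \<in> A \<Longrightarrow> continuous_on_square (F i)) \<Longrightarrow> continuous_on_square (\<lambda>t s. \<Prod>i\<in>A. F i t s)"
  unfolding continuous_on_square_def by (intro continuous_on_prod) auto

lemma continuous_on_square_ln:
  assumes "continuous_on_square F" "\<And>t s. t \<in> {0..1} \<Longrightarrow> s \<in> {0..1} \<Longrightarrow> F t s > 0"
  shows "continuous_on_square (\<lambda>t s. ln (F t s))"
  using assms unfolding continuous_on_square_def by (intro continuous_intros) (auto simp: less_le)

lemma square_integral_mono: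
  assumes "continuous_on_square F" "continuous_on_square G"
    and "\<And>t s. t \<in> {0..1} \<Longrightarrow> s \<in> {0..1} \<Longrightarrow> F t s \<le> G t s"
  shows "square_integral F \<le> square_integral G"
  unfolding square_integral_def
  by (intro integral_le continuous_on_square_integrable assms ballI) auto

lemma square_integral_cong:
  "(\<And>t s. t \<in> {0..1} \<Longrightarrow> s \<in> {0..1} \<Longrightarrow> F t s = G t s) \<Longrightarrow> square_integral F = square_integral G"
  unfolding square_integral_def by (intro integral_cong) auto

lemma square_integral_affine:
  assumes "continuous_on_square F"
  shows "square_integral (\<lambda>t s. a + b * F t s) = a + b * square_integral F"
proof -
  have const: "(\<lambda>s::real. a) integrable_on {0..1}"
    by (simp add: integrable_continuous_interval continuous_on_const)
  have "integral {0..1} (\<lambda>s. a + b * F t s) = a + b * integral {0..1} (F t)" if "t \<in> {0..1}" for t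
    using continuous_on_square_integrable(1)[OF assms that] const
    by (subst integral_add) (auto intro: integrable_on_mult_right)
  then have "square_integral (\<lambda>t s. a + b * F t s) = integral {0..1} (\<lambda>t. a + b * integral {0..1} (F t))"
    unfolding square_integral_def by (intro integral_cong) auto
  also have "\<dots> = a + b * square_integral F"
    using continuous_on_square_integrable(2)[OF assms] const
    by (subst integral_add) (auto intro: integrable_on_mult_right simp: square_integral_def)
  finally show ?thesis .
qed

lemma square_integral_sum:
  assumes "finite A" "\<And>i. i \<in> A \<Longrightarrow> continuous_on_square (F i)"
  shows "square_integral (\<lambda>t s. \<Sum>i\<in>A. F i t s) = (\<Sum>i\<in>A. square_integral (F i))"
proof -
  have "integral {0..1} (\<lambda>s. \<Sum>i\<in>A. F i t s) = (\<Sum>i\<in>A. integral {0..1} (F i t))" if "t \<in> {0..1}" for t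
    using that by (intro integral_sum continuous_on_square_integrable(1) assms)
  then have "square_integral (\<lambda>t s. \<Sum>i\<in>A. F i t s) = integral {0..1} (\<lambda>t. \<Sum>i\<in>A. integral {0..1} (F i t))"
    unfolding square_integral_def by (intro integral_cong) auto
  also have "\<dots> = (\<Sum>i\<in>A. square_integral (F i))"
    unfolding square_integral_def by (intro integral_sum continuous_on_square_integrable(2) assms)
  finally show ?thesis .
qed

lemma square_integral_ge_const:
  assumes "continuous_on_square F" "\<And>t s. t \<in> {0..1} \<Longrightarrow> s \<in> {0..1} \<Longrightarrow> a \<le> F t s"
  shows "a \<le> square_integral F"
proof -
  have "a = square_integral (\<lambda>t s. a + 0 * F t s)"
    using square_integral_affine[OF assms(1), of a 0] by simp
  also have "\<dots> \<le> square_integral F"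
    by (rule square_integral_mono[OF continuous_on_square_affine[OF assms(1)] assms(1)]) (simp add: assms(2))
  finally show ?thesis .
qed

text \<open>Jensen's inequality for the concave function \<open>ln\<close>, via its tangent line at the mean.\<close>
lemma square_integral_ln_le_ln_square_integral:
  assumes F: "continuous_on_square F"
    and lower: "\<And>t s. t \<in> {0..1} \<Longrightarrow> s \<in> {0..1} \<Longrightarrow> F t s \<ge> a" and "a > 0"
  shows "square_integral (\<lambda>t s. ln (F t s)) \<le> ln (square_integral F)"
proof -
  define c where "c = square_integral F"
  have "c > 0"
    using square_integral_ge_const[OF F lower] \<open>a > 0\<close> by (simp add: c_def)
  have pos: "F t s > 0" if "t \<in> {0..1}" "s \<in> {0..1}" for t s
    using lower[OF that] \<open>a > 0\<close> by linarith
  have "square_integral (\<lambda>t s. ln (F t s)) \<le> square_integral (\<lambda>t s. (ln c - 1) + (1 / c) * F t s)"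
  proof (rule square_integral_mono)
    fix t s :: real
    assume "t \<in> {0..1}" "s \<in> {0..1}"
    then have "F t s > 0"
      by (rule pos)
    then have "ln (F t s / c) \<le> F t s / c - 1"
      using \<open>c > 0\<close> by (intro ln_le_minus_one) simp
    then show "ln (F t s) \<le> (ln c - 1) + (1 / c) * F t s"
      using \<open>F t s > 0\<close> \<open>c > 0\<close> by (simp add: ln_div)
  qed (use continuous_on_square_ln[OF F pos] continuous_on_square_affine[OF F, of "ln c - 1" "1 / c"] in auto)
  also have "\<dots> = ln c"
    using \<open>c > 0\<close> square_integral_affine[OF F, of "ln c - 1" "1 / c"] by (simp add: c_def)
  finally show ?thesis
    by (simp add: c_def)
qed

text \<open>Since \<open>|x - z y|\<close> is
  invariant under \<open>(x, y) \<mapsto> (\<zeta> x, \<zeta> y)\<close> for \<open>|\<zeta>| = 1\<close>, averages over the unit square are averages over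
  the unit sphere of \<open>\<complex>\<^sup>2\<close>, that is, over the Riemann sphere with its normalized area measure.\<close>
definition root_factor_sq :: "complex \<Rightarrow> real \<Rightarrow> real \<Rightarrow> real" where
  "root_factor_sq z t s = (cmod (of_real (sqrt t) * circ s - z * of_real (sqrt (1 - t))))\<^sup>2"

lemma root_factor_sq_nonneg: "root_factor_sq z t s \<ge> 0"
  by (simp add: root_factor_sq_def)

lemma continuous_on_root_factor_sq:
  "continuous_on A (\<lambda>x. root_factor_sq z (fst x) (snd x))"
proof -
  have "continuous_on A (\<lambda>x. circ (snd x))"
    by (rule continuous_on_compose2[OF continuous_on_circ continuous_on_snd]) auto
  then show ?thesis
    unfolding root_factor_sq_def by (intro continuous_intros) auto
qed

lemma continuous_on_square_root_factor_sq: "continuous_on_square (root_factor_sq z)"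
  unfolding continuous_on_square_def by (rule continuous_on_root_factor_sq)

lemma continuous_on_square_ln_root_factor_sq:
  assumes "\<delta> > 0"
  shows "continuous_on_square (\<lambda>t s. ln (root_factor_sq z t s + \<delta>))"
  unfolding continuous_on_square_def
  using assms root_factor_sq_nonneg
  by (intro continuous_intros continuous_on_root_factor_sq) (metis add_nonneg_pos less_irrefl)

lemma root_factor_sq_le:
  assumes "t \<in> {0..1}"
  shows "root_factor_sq z t s \<le> (1 + cmod z)\<^sup>2"
proof -
  have "cmod (of_real (sqrt t) * circ s - z * of_real (sqrt (1 - t))) \<le> sqrt t + cmod z * sqrt (1 - t)"
    using norm_triangle_ineq4[of "of_real (sqrt t) * circ s" "z * of_real (sqrt (1 - t))"] assms
    by (simp add: norm_mult)
  also have "\<dots> \<le> 1 + cmod z * 1"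
    using assms by (intro add_mono mult_left_mono) auto
  finally show ?thesis
    unfolding root_factor_sq_def by (intro power_mono) auto
qed

lemma root_factor_sq_pos:
  assumes "t \<in> {0..1}" "t \<noteq> (cmod z)\<^sup>2 * (1 - t)"
  shows "root_factor_sq z t s > 0"
proof -
  have "sqrt t \<noteq> cmod z * sqrt (1 - t)"
    using assms by (metis power_mult_distrib real_sqrt_pow2 diff_ge_0_iff_ge atLeastAtMost_iff)
  moreover have "\<bar>sqrt t - cmod z * sqrt (1 - t)\<bar> \<le> cmod (of_real (sqrt t) * circ s - z * of_real (sqrt (1 - t)))"
    using norm_triangle_ineq3[of "of_real (sqrt t) * circ s" "z * of_real (sqrt (1 - t))"] assms
    by (simp add: norm_mult)
  ultimately show ?thesis
    unfolding root_factor_sq_def by auto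
qed

lemma has_integral_ln_root_factor_sq:
  assumes t: "t \<in> {0..1}" "t \<noteq> (cmod z)\<^sup>2 * (1 - t)"
  shows "((\<lambda>s. ln (root_factor_sq z t s)) has_integral ln (max t ((cmod z)\<^sup>2 * (1 - t)))) {0..1}"
proof -
  define b where "b = z * of_real (sqrt (1 - t))"
  have norm_b: "cmod b = sqrt ((cmod z)\<^sup>2 * (1 - t))"
    using t by (simp add: b_def norm_mult real_sqrt_mult)
  then have "sqrt t \<noteq> cmod b"
    using t by simp
  then have "((\<lambda>s. ln ((cmod (of_real (sqrt t) * circ s - b))\<^sup>2)) has_integral
      2 * ln (max (sqrt t) (cmod b))) {0..1}"
    using t by (intro has_integral_ln_norm_sq_circ_minus) auto
  moreover have "2 * ln (max (sqrt t) (cmod b)) = ln (max t ((cmod z)\<^sup>2 * (1 - t)))"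
  proof -
    have "max (sqrt t) (cmod b) = sqrt (max t ((cmod z)\<^sup>2 * (1 - t)))"
      by (simp add: norm_b max_def)
    moreover have "max t ((cmod z)\<^sup>2 * (1 - t)) > 0"
    proof -
      have "(cmod z)\<^sup>2 * (1 - t) \<ge> 0"
        using t by simp
      then show ?thesis
        using t unfolding less_max_iff_disj by (cases "t = 0") auto
    qed
    ultimately show ?thesis
      by (simp add: ln_sqrt)
  qed
  ultimately show ?thesis
    by (simp add: root_factor_sq_def b_def)
qed

lemma ln_max_le_integral_ln_root_factor_sq:
  assumes "t \<in> {0..1}" "t \<noteq> (cmod z)\<^sup>2 * (1 - t)" "\<delta> > 0"
  shows "ln (max t ((cmod z)\<^sup>2 * (1 - t))) \<le> integral {0..1} (\<lambda>s. ln (root_factor_sq z t s + \<delta>))"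
proof (rule has_integral_le[OF has_integral_ln_root_factor_sq[OF assms(1,2)]])
  show "((\<lambda>s. ln (root_factor_sq z t s + \<delta>)) has_integral integral {0..1} (\<lambda>s. ln (root_factor_sq z t s + \<delta>))) {0..1}"
    using continuous_on_square_integrable(1)[OF continuous_on_square_ln_root_factor_sq assms(1)] assms(3)
    by (simp add: has_integral_integral)
  show "ln (root_factor_sq z t s) \<le> ln (root_factor_sq z t s + \<delta>)" for s
    using root_factor_sq_pos[OF assms(1,2), of s] assms(3) by simp
qed

text \<open>For \<open>z = 0\<close> the spherical average of \<open>ln |x|\<^sup>2\<close> is \<open>\<integral> ln t = -1\<close>; it is reached through the
  continuous minorant \<open>ln (max t (\<delta> (1 - t)))\<close> of \<open>ln (t + \<delta>)\<close>.\<close>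
lemma square_integral_ln_root_factor_sq_ge:
  assumes "\<delta> > 0"
  shows "ln (1 + (cmod z)\<^sup>2) - 1 \<le> square_integral (\<lambda>t s. ln (root_factor_sq z t s + \<delta>))"
proof -
  define G where "G = (\<lambda>t. integral {0..1} (\<lambda>s. ln (root_factor_sq z t s + \<delta>)))"
  have "continuous_on_square (\<lambda>t s. ln (root_factor_sq z t s + \<delta>))"
    using assms by (rule continuous_on_square_ln_root_factor_sq)
  then have integral_G: "(G has_integral square_integral (\<lambda>t s. ln (root_factor_sq z t s + \<delta>))) {0..1}"
    using continuous_on_square_integrable(2) by (simp add: G_def square_integral_def has_integral_integral)
  show ?thesis
  proof (cases "z = 0")
    case True
    have "ln (max t (\<delta> * (1 - t))) \<le> G t" if "t \<in> {0..1}" for t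
    proof -
      have "G t = ln (t + \<delta>)"
        using that True by (simp add: G_def root_factor_sq_def norm_mult)
      moreover have "max t (\<delta> * (1 - t)) \<le> t + \<delta>" "0 < max t (\<delta> * (1 - t))"
        using that assms by (auto simp: less_max_iff_disj algebra_simps)
      ultimately show ?thesis
        using ln_mono by presburger
    qed
    then have "ln (1 + \<delta>) - 1 \<le> square_integral (\<lambda>t s. ln (root_factor_sq z t s + \<delta>))"
      by (intro has_integral_le[OF has_integral_ln_max_affine[OF assms] integral_G])
    moreover have "ln (1 + \<delta>) \<ge> 0"
      using assms by simp
    ultimately show ?thesis
      using True by simp
  next
    case False
    define \<sigma> where "\<sigma> = (cmod z)\<^sup>2"
    have "\<sigma> > 0"
      using False by (simp add: \<sigma>_def)
    define t0 where "t0 = \<sigma> / (1 + \<sigma>)"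
    have "t \<noteq> \<sigma> * (1 - t)" if "t \<noteq> t0" for t
      using that \<open>\<sigma> > 0\<close> by (auto simp: t0_def field_simps)
    then have lower: "ln (max t (\<sigma> * (1 - t))) \<le> G t" if "t \<in> {0..1}" "t \<noteq> t0" for t
      using ln_max_le_integral_ln_root_factor_sq[of t z \<delta>] that assms by (simp add: G_def \<sigma>_def)
    text \<open>At \<open>t0\<close> the circle \<open>|x| = \<surd>t0\<close> passes through \<open>z \<surd>(1 - t0)\<close>; change \<open>G\<close> at this point.\<close>
    have "((\<lambda>t. if t = t0 then ln (max t (\<sigma> * (1 - t))) else G t) has_integral
        square_integral (\<lambda>t s. ln (root_factor_sq z t s + \<delta>))) {0..1}"
      by (rule has_integral_spike_finite[where S = "{t0}", OF _ _ integral_G]) auto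
    with has_integral_ln_max_affine[OF \<open>\<sigma> > 0\<close>] show ?thesis
      unfolding \<sigma>_def by (rule has_integral_le) (use lower \<sigma>_def in auto)
  qed
qed

lemma bw_norm_sq_div_Suc_degree:
  "(bw_norm P)\<^sup>2 / (real (degree P) + 1) =
     (\<Sum>k\<le>degree P. (cmod (coeff P k))\<^sup>2 * (fact k * fact (degree P - k) / fact (degree P + 1)))"
proof -
  define n where "n = degree P"
  have "(bw_norm P)\<^sup>2 = (\<Sum>k\<le>n. (cmod (coeff P k))\<^sup>2 / real (n choose k))"
    unfolding bw_norm_def n_def by (intro real_sqrt_pow2 sum_nonneg) auto
  moreover have "(cmod (coeff P k))\<^sup>2 / real (n choose k) / (real n + 1) =
      (cmod (coeff P k))\<^sup>2 * (fact k * fact (n - k) / fact (n + 1))" if "k \<le> n" for k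
  proof -
    have binomial: "real (n choose k) = fact n / (fact k * fact (n - k))"
      using binomial_fact[OF that] by simp
    have fact_Suc: "(fact (n + 1) :: real) = (real n + 1) * fact n"
      by (simp add: algebra_simps)
    show ?thesis
      unfolding binomial fact_Suc by (simp add: field_simps)
  qed
  ultimately show ?thesis
    by (simp add: sum_divide_distrib n_def)
qed

text \<open>Expanding the product as the homogenized polynomial, the circle average is computed by
  Parseval's identity.\<close>
lemma has_integral_prod_root_factor_sq:
  assumes R: "finite R" and t: "t \<in> {0..1}"
  defines "P \<equiv> \<Prod>z\<in>R. [:-z, 1:]"
  shows "((\<lambda>s. \<Prod>z\<in>R. root_factor_sq z t s) has_integral
     (\<Sum>k\<le>card R. (cmod (coeff P k))\<^sup>2 * (t ^ k * (1 - t) ^ (card R - k)))) {0..1}"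
proof -
  define n where "n = card R"
  define d where "d k = coeff P k * of_real (sqrt t ^ k * sqrt (1 - t) ^ (n - k))" for k
  have norm_prod: "(\<Prod>z\<in>R. root_factor_sq z t s) =
      (cmod (\<Prod>z\<in>R. of_real (sqrt t) * circ s - z * of_real (sqrt (1 - t))))\<^sup>2" for s
    unfolding root_factor_sq_def prod_power_distrib[symmetric] prod_norm ..
  have homogenized: "(\<Prod>z\<in>R. of_real (sqrt t) * circ s - z * of_real (sqrt (1 - t))) =
      (\<Sum>k\<le>n. d k * circ s ^ k)" for s
    unfolding prod_linear_forms_eq_homogenize[OF R] homogenize_def d_def P_def n_def
    by (intro sum.cong refl) (simp add: power_mult_distrib algebra_simps)
  have "((\<lambda>s. \<Prod>z\<in>R. root_factor_sq z t s) has_integral (\<Sum>k\<le>n. (cmod (d k))\<^sup>2)) {0..1}"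
    unfolding norm_prod homogenized by (rule has_integral_norm_sq_sum_circ_power)
  moreover have "(cmod (d k))\<^sup>2 = (cmod (coeff P k))\<^sup>2 * (t ^ k * (1 - t) ^ (n - k))" for k
  proof -
    have "(sqrt x ^ m)\<^sup>2 = x ^ m" if "x \<ge> 0" for x :: real and m
      using that by (metis power_mult mult.commute real_sqrt_pow2)
    then show ?thesis
      using t by (simp add: d_def norm_mult norm_power power_mult_distrib)
  qed
  ultimately show ?thesis
    by (simp add: n_def)
qed

lemma square_integral_prod_root_factor_sq:
  assumes "finite R"
  shows "square_integral (\<lambda>t s. \<Prod>z\<in>R. root_factor_sq z t s) =
    (bw_norm (\<Prod>z\<in>R. [:-z, 1:]))\<^sup>2 / (real (card R) + 1)"
proof -
  define P where "P = (\<Prod>z\<in>R. [:-z, 1:])"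
  define n where "n = card R"
  define Q where "Q t = (\<Sum>k\<le>n. (cmod (coeff P k))\<^sup>2 * (t ^ k * (1 - t) ^ (n - k)))" for t
  have "square_integral (\<lambda>t s. \<Prod>z\<in>R. root_factor_sq z t s) = integral {0..1} Q"
    unfolding square_integral_def using has_integral_prod_root_factor_sq[OF assms]
    by (intro integral_cong) (simp add: Q_def P_def n_def integral_unique)
  also have "(Q has_integral (\<Sum>k\<le>n. (cmod (coeff P k))\<^sup>2 * (fact k * fact (n - k) / fact (n + 1)))) {0..1}"
    unfolding Q_def
  proof (intro has_integral_sum finite_atMost ballI has_integral_mult_right)
    fix k
    assume "k \<in> {..n}"
    then show "((\<lambda>t::real. t ^ k * (1 - t) ^ (n - k)) has_integral fact k * fact (n - k) / fact (n + 1)) {0..1}"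
      using has_integral_power_mult_one_minus_power[of k "n - k"] by simp
  qed
  then have "integral {0..1} Q = (\<Sum>k\<le>n. (cmod (coeff P k))\<^sup>2 * (fact k * fact (n - k) / fact (n + 1)))"
    by (rule integral_unique)
  also have "\<dots> = (bw_norm P)\<^sup>2 / (real n + 1)"
    using bw_norm_sq_div_Suc_degree[of P] by (simp add: P_def n_def degree_prod_linear_factors)
  finally show ?thesis
    by (simp add: P_def n_def)
qed

lemma prod_add_le_prod_add_mult:
  fixes x M :: "'a \<Rightarrow> real"
  assumes "finite A" "\<And>i. i \<in> A \<Longrightarrow> 0 \<le> x i \<and> x i \<le> M i" "0 < \<delta>" "\<delta> \<le> 1"
  shows "(\<Prod>i\<in>A. x i + \<delta>) \<le> (\<Prod>i\<in>A. x i) + \<delta> * (\<Prod>i\<in>A. M i + 2)"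
  using assms(1,2)
proof (induction A rule: finite_induct)
  case empty
  then show ?case
    using assms by simp
next
  case (insert a A)
  define P K where "P = (\<Prod>i\<in>A. x i)" and "K = (\<Prod>i\<in>A. M i + 2)"
  have x_a: "0 \<le> x a" "x a \<le> M a"
    using insert.prems by auto
  have bounds: "0 \<le> x i" "x i \<le> M i + 2" if "i \<in> A" for i
    using insert.prems that by force+
  have "0 \<le> P" "P \<le> K"
    unfolding P_def K_def using bounds by (auto intro!: prod_nonneg prod_mono)
  have "(\<Prod>i\<in>insert a A. x i + \<delta>) = (x a + \<delta>) * (\<Prod>i\<in>A. x i + \<delta>)"
    using insert.hyps by simp
  also have "\<dots> \<le> (x a + \<delta>) * (P + \<delta> * K)"
    using insert x_a assms(3) by (intro mult_left_mono) (auto simp: P_def K_def)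
  also have "\<dots> = x a * P + \<delta> * (x a * K + P + \<delta> * K)"
    by (simp add: algebra_simps)
  also have "\<dots> \<le> x a * P + \<delta> * (M a * K + K + K)"
  proof -
    have "x a * K \<le> M a * K" "\<delta> * K \<le> K"
      using x_a \<open>0 \<le> P\<close> \<open>P \<le> K\<close> assms(3,4) by (auto intro: mult_right_mono mult_left_le_one_le)
    then have "x a * K + P + \<delta> * K \<le> M a * K + K + K"
      using \<open>P \<le> K\<close> by linarith
    then show ?thesis
      using assms(3) by simp
  qed
  also have "\<dots> = (\<Prod>i\<in>insert a A. x i) + \<delta> * (\<Prod>i\<in>insert a A. M i + 2)"
    using insert.hyps by (simp add: P_def K_def algebra_simps)
  finally show ?case .
qed

lemma le_ln_of_le_ln_add:
  fixes X \<beta> K :: real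
  assumes "\<And>\<delta>. 0 < \<delta> \<Longrightarrow> \<delta> \<le> 1 \<Longrightarrow> X \<le> ln (\<beta> + \<delta> * K)" "\<beta> > 0" "K > 0"
  shows "X \<le> ln \<beta>"
proof -
  have "exp X \<le> \<beta> + e" if "e > 0" for e
  proof -
    define \<delta> where "\<delta> = min 1 (e / K)"
    have "0 < \<delta>" "\<delta> \<le> 1" "\<delta> \<le> e / K"
      using that assms(3) by (auto simp: \<delta>_def)
    then have "\<delta> * K \<le> e"
      using assms(3) by (simp add: pos_le_divide_eq)
    have "exp X \<le> exp (ln (\<beta> + \<delta> * K))"
      using assms(1)[OF \<open>0 < \<delta>\<close> \<open>\<delta> \<le> 1\<close>] by simp
    also have "\<dots> = \<beta> + \<delta> * K"
      using \<open>0 < \<delta>\<close> assms(2,3) by (simp add: add_pos_pos)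
    finally show ?thesis
      using \<open>\<delta> * K \<le> e\<close> by linarith
  qed
  then have "exp X \<le> \<beta>"
    by (rule field_le_epsilon)
  then show ?thesis
    using assms(2) by (simp add: ln_ge_iff)
qed

lemma continuous_on_square_prod_root_factor_sq_add:
  "continuous_on_square (\<lambda>t s. \<Prod>z\<in>R. root_factor_sq z t s + \<delta>)"
  unfolding continuous_on_square_def
  by (intro continuous_on_prod continuous_intros continuous_on_root_factor_sq)

lemma square_integral_prod_root_factor_sq_add_le:
  fixes R :: "complex set"
  assumes R: "finite R" and \<delta>: "0 < \<delta>" "\<delta> \<le> 1"
  shows "square_integral (\<lambda>t s. \<Prod>z\<in>R. root_factor_sq z t s + \<delta>) \<le>
    (bw_norm (\<Prod>z\<in>R. [:-z, 1:]))\<^sup>2 / (real (card R) + 1) + \<delta> * (\<Prod>z\<in>R. (1 + cmod z)\<^sup>2 + 2)"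
proof -
  define K where "K = (\<Prod>z\<in>R. (1 + cmod z)\<^sup>2 + 2)"
  have cont_prod: "continuous_on_square (\<lambda>t s. \<Prod>z\<in>R. root_factor_sq z t s)"
    by (intro continuous_on_square_prod continuous_on_square_root_factor_sq)
  have "square_integral (\<lambda>t s. \<Prod>z\<in>R. root_factor_sq z t s + \<delta>) \<le>
      square_integral (\<lambda>t s. \<delta> * K + 1 * (\<Prod>z\<in>R. root_factor_sq z t s))"
  proof (rule square_integral_mono[OF continuous_on_square_prod_root_factor_sq_add
        continuous_on_square_affine[OF cont_prod]])
    fix t s :: real
    assume "t \<in> {0..1}"
    have "(\<Prod>z\<in>R. root_factor_sq z t s + \<delta>) \<le> (\<Prod>z\<in>R. root_factor_sq z t s) + \<delta> * K"
      unfolding K_def by (rule prod_add_le_prod_add_mult)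
        (use R \<delta> root_factor_sq_nonneg root_factor_sq_le[OF \<open>t \<in> {0..1}\<close>] in auto)
    then show "(\<Prod>z\<in>R. root_factor_sq z t s + \<delta>) \<le> \<delta> * K + 1 * (\<Prod>z\<in>R. root_factor_sq z t s)"
      by simp
  qed
  also have "\<dots> = \<delta> * K + 1 * ((bw_norm (\<Prod>z\<in>R. [:-z, 1:]))\<^sup>2 / (real (card R) + 1))"
    unfolding square_integral_affine[OF cont_prod] square_integral_prod_root_factor_sq[OF R] ..
  finally show ?thesis
    by (simp add: K_def)
qed

text \<open>The spherical average of \<open>ln |P|\<^sup>2\<close> is at most the logarithm of the spherical average of
  \<open>|P|\<^sup>2\<close>, which is the squared Bombieri--Weyl norm up to the factor \<open>1/(N+1)\<close>.\<close>
lemma sum_ln_one_plus_norm_sq_le: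
  fixes R :: "complex set"
  assumes R: "finite R" and bw_pos: "bw_norm (\<Prod>z\<in>R. [:-z, 1:]) > 0"
  shows "(\<Sum>z\<in>R. ln (1 + (cmod z)\<^sup>2) - 1) \<le>
    ln ((bw_norm (\<Prod>z\<in>R. [:-z, 1:]))\<^sup>2 / (real (card R) + 1))"
proof -
  define \<beta> where "\<beta> = (bw_norm (\<Prod>z\<in>R. [:-z, 1:]))\<^sup>2 / (real (card R) + 1)"
  define K where "K = (\<Prod>z\<in>R. (1 + cmod z)\<^sup>2 + 2)"
  have "\<beta> > 0" "K > 0"
    using bw_pos by (auto simp: \<beta>_def K_def intro!: prod_pos add_nonneg_pos)
  have "(\<Sum>z\<in>R. ln (1 + (cmod z)\<^sup>2) - 1) \<le> ln (\<beta> + \<delta> * K)" if \<delta>: "0 < \<delta>" "\<delta> \<le> 1" for \<delta>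
  proof -
    define \<Phi> where "\<Phi> = (\<lambda>t s. \<Prod>z\<in>R. root_factor_sq z t s + \<delta>)"
    have cont_\<Phi>: "continuous_on_square \<Phi>"
      unfolding \<Phi>_def by (rule continuous_on_square_prod_root_factor_sq_add)
    have \<Phi>_ge: "\<delta> ^ card R \<le> \<Phi> t s" for t s
      using prod_mono[of R "\<lambda>_. \<delta>" "\<lambda>z. root_factor_sq z t s + \<delta>"] \<delta>
      by (simp add: \<Phi>_def root_factor_sq_nonneg)
    have "(\<Sum>z\<in>R. ln (1 + (cmod z)\<^sup>2) - 1) \<le> (\<Sum>z\<in>R. square_integral (\<lambda>t s. ln (root_factor_sq z t s + \<delta>)))"
      using \<delta> by (intro sum_mono square_integral_ln_root_factor_sq_ge)
    also have "\<dots> = square_integral (\<lambda>t s. \<Sum>z\<in>R. ln (root_factor_sq z t s + \<delta>))"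
      using R \<delta> by (intro square_integral_sum[symmetric] continuous_on_square_ln_root_factor_sq)
    also have "\<dots> = square_integral (\<lambda>t s. ln (\<Phi> t s))"
    proof -
      have "root_factor_sq z t s + \<delta> \<noteq> 0" for z t s
        using root_factor_sq_nonneg[of z t s] \<delta> by linarith
      then show ?thesis
        unfolding \<Phi>_def using R by (intro square_integral_cong ln_prod[symmetric]) auto
    qed
    also have "\<dots> \<le> ln (square_integral \<Phi>)"
      using \<Phi>_ge \<delta> by (intro square_integral_ln_le_ln_square_integral[of \<Phi> "\<delta> ^ card R", OF cont_\<Phi>]) auto
    also have "\<dots> \<le> ln (\<beta> + \<delta> * K)"
    proof (rule ln_mono)
      show "0 < square_integral \<Phi>"
        using square_integral_ge_const[OF cont_\<Phi> \<Phi>_ge] \<delta> by (meson less_le_trans zero_less_power)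
      show "square_integral \<Phi> \<le> \<beta> + \<delta> * K"
        unfolding \<Phi>_def \<beta>_def K_def using R \<delta> by (rule square_integral_prod_root_factor_sq_add_le)
    qed
    finally show ?thesis .
  qed
  from le_ln_of_le_ln_add[OF this \<open>\<beta> > 0\<close> \<open>K > 0\<close>] show ?thesis
    by (simp add: \<beta>_def)
qed

definition inv_stereo :: "complex \<Rightarrow> real^3" where
  "inv_stereo z = vector [2 * Re z / (1 + (cmod z)\<^sup>2), 2 * Im z / (1 + (cmod z)\<^sup>2),
                          ((cmod z)\<^sup>2 - 1) / ((cmod z)\<^sup>2 + 1)]"

lemma inv_stereo_nth:
  "inv_stereo z $ 1 = 2 * Re z / (1 + (cmod z)\<^sup>2)"
  "inv_stereo z $ 2 = 2 * Im z / (1 + (cmod z)\<^sup>2)"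
  "inv_stereo z $ 3 = ((cmod z)\<^sup>2 - 1) / ((cmod z)\<^sup>2 + 1)"
  by (simp_all add: inv_stereo_def)

lemma north_pole_nth: "north_pole $ 1 = 0" "north_pole $ 2 = 0" "north_pole $ 3 = 1"
  by (simp_all add: north_pole_def)

lemma norm_sq_vec3: "(norm (x :: real^3))\<^sup>2 = (x$1)\<^sup>2 + (x$2)\<^sup>2 + (x$3)\<^sup>2"
  unfolding power2_norm_eq_inner by (simp add: inner_vec_def sum_3 power2_eq_square)

lemma inv_stereo_in_sphere: "inv_stereo z \<in> sphere 0 1"
proof -
  define q where "q = (Re z)\<^sup>2 + (Im z)\<^sup>2"
  have "q \<ge> 0"
    by (simp add: q_def)
  have "(norm (inv_stereo z))\<^sup>2 = (2 * Re z / (1 + q))\<^sup>2 + (2 * Im z / (1 + q))\<^sup>2 + ((q - 1) / (q + 1))\<^sup>2"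
    by (simp add: norm_sq_vec3 inv_stereo_nth cmod_power2 q_def)
  also have "\<dots> = (4 * q + (q - 1)\<^sup>2) / (1 + q)\<^sup>2"
    using \<open>q \<ge> 0\<close> by (simp add: power_divide add_divide_distrib power_mult_distrib add.commute q_def)
  also have "4 * q + (q - 1)\<^sup>2 = (1 + q)\<^sup>2"
    by (simp add: power2_eq_square algebra_simps)
  also have "(1 + q)\<^sup>2 / (1 + q)\<^sup>2 = 1"
    using \<open>q \<ge> 0\<close> by simp
  finally have "(norm (inv_stereo z))\<^sup>2 = 1" .
  then show ?thesis
    using norm_ge_zero[of "inv_stereo z"] by (auto simp: power2_eq_1_iff)
qed

lemma inv_stereo_ne_north_pole: "inv_stereo z \<noteq> north_pole"
proof
  assume "inv_stereo z = north_pole"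
  then have "inv_stereo z $ 3 = 1"
    by (simp add: north_pole_nth)
  then show False
    by (simp add: inv_stereo_nth add_nonneg_pos field_simps)
qed

lemma stereo_inv_stereo: "stereo (inv_stereo z) = z"
proof -
  define q where "q = (cmod z)\<^sup>2"
  have "q \<ge> 0"
    by (simp add: q_def)
  then have nonzero: "q + 1 \<noteq> 0" "1 + q \<noteq> 0"
    by auto
  have "1 - inv_stereo z $ 3 = 2 / (1 + q)"
    using nonzero unfolding inv_stereo_nth q_def[symmetric] by (simp add: field_simps)
  then have "stereo (inv_stereo z) =
      Complex (2 * Re z / (1 + q)) (2 * Im z / (1 + q)) / complex_of_real (2 / (1 + q))"
    unfolding stereo_def by (simp add: inv_stereo_nth q_def)
  also have "\<dots> = Complex ((2 * Re z / (1 + q)) / (2 / (1 + q))) ((2 * Im z / (1 + q)) / (2 / (1 + q)))"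
    by (simp add: complex_eq_iff)
  also have "(2 * Re z / (1 + q)) / (2 / (1 + q)) = Re z"
    using nonzero by simp
  also have "(2 * Im z / (1 + q)) / (2 / (1 + q)) = Im z"
    using nonzero by simp
  finally show ?thesis
    by simp
qed

lemma third_coordinate_lt_1:
  fixes x :: "real^3"
  assumes "x \<in> sphere 0 1" "x \<noteq> north_pole"
  shows "x $ 3 < 1"
proof -
  have sphere: "(x$1)\<^sup>2 + (x$2)\<^sup>2 + (x$3)\<^sup>2 = 1"
    using assms(1) norm_sq_vec3[of x] by simp
  then have "(x$3)\<^sup>2 \<le> 1"
    by (smt (verit) zero_le_power2)
  then have "x$3 \<le> 1"
    using abs_square_le_1 abs_le_D1 by blast
  moreover have "x $ 3 \<noteq> 1"
  proof
    assume "x $ 3 = 1"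
    then have "(x$1)\<^sup>2 + (x$2)\<^sup>2 = 0"
      using sphere by simp
    then have "x $ 1 = 0" "x $ 2 = 0"
      by (auto simp: sum_power2_eq_zero_iff)
    then have "x = north_pole"
      using \<open>x $ 3 = 1\<close> by (simp add: vec_eq_iff forall_3 north_pole_nth)
    then show False
      using assms(2) by simp
  qed
  ultimately show ?thesis
    by linarith
qed

lemma inv_stereo_stereo:
  assumes "x \<in> sphere 0 1" "x \<noteq> north_pole"
  shows "inv_stereo (stereo x) = x"
proof -
  define a b c where "a = x$1" "b = x$2" "c = x$3"
  have "c < 1"
    using third_coordinate_lt_1[OF assms] by (simp add: a_b_c_def)
  have "a\<^sup>2 + b\<^sup>2 = (1 - c) * (1 + c)"
    using assms(1) norm_sq_vec3[of x] by (simp add: a_b_c_def algebra_simps power2_eq_square)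
  have z: "stereo x = Complex (a / (1 - c)) (b / (1 - c))"
    using \<open>c < 1\<close> by (simp add: stereo_def complex_eq_iff a_b_c_def)
  have q: "(cmod (stereo x))\<^sup>2 = (1 + c) / (1 - c)"
  proof -
    have "(cmod (stereo x))\<^sup>2 = (a\<^sup>2 + b\<^sup>2) / (1 - c)\<^sup>2"
      unfolding z cmod_power2 by (simp add: power_divide add_divide_distrib)
    also have "a\<^sup>2 + b\<^sup>2 = (1 - c) * (1 + c)"
      by fact
    finally show ?thesis
      using \<open>c < 1\<close> by (simp add: power2_eq_square)
  qed
  have d: "1 + (cmod (stereo x))\<^sup>2 = 2 / (1 - c)"
    using \<open>c < 1\<close> unfolding q by (simp add: field_simps)
  show ?thesis
  proof (simp add: vec_eq_iff forall_3, intro conjI)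
    show "inv_stereo (stereo x) $ 1 = x $ 1" "inv_stereo (stereo x) $ 2 = x $ 2"
      unfolding inv_stereo_nth d using \<open>c < 1\<close> by (simp_all add: z a_b_c_def)
    show "inv_stereo (stereo x) $ 3 = x $ 3"
      unfolding inv_stereo_nth q using \<open>c < 1\<close> by (simp add: field_simps a_b_c_def)
  qed
qed

lemma inj_inv_stereo: "inj inv_stereo"
  by (metis injI stereo_inv_stereo)

lemma sphere_stereo_preimage:
  "{x \<in> sphere 0 1. x \<noteq> north_pole \<and> stereo x \<in> A} = inv_stereo ` A"
  using inv_stereo_stereo inv_stereo_in_sphere inv_stereo_ne_north_pole stereo_inv_stereo
  by (auto simp: image_iff) metis

lemma norm_inv_stereo_diff_sq:
  "(norm (inv_stereo z - inv_stereo w))\<^sup>2 = 4 * (cmod (z - w))\<^sup>2 / ((1 + (cmod z)\<^sup>2) * (1 + (cmod w)\<^sup>2))"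
proof -
  define u v u' v' where "u = Re z" "v = Im z" "u' = Re w" "v' = Im w"
  define q q' where "q = u\<^sup>2 + v\<^sup>2" "q' = u'\<^sup>2 + v'\<^sup>2"
  have "q \<ge> 0" "q' \<ge> 0"
    by (simp_all add: q_q'_def)
  then have nonzero: "1 + q \<noteq> 0" "1 + q' \<noteq> 0" "q + 1 \<noteq> 0" "q' + 1 \<noteq> 0"
    by auto
  have "(norm (inv_stereo z - inv_stereo w))\<^sup>2 =
      (2 * u / (1 + q) - 2 * u' / (1 + q'))\<^sup>2 + (2 * v / (1 + q) - 2 * v' / (1 + q'))\<^sup>2 +
      ((q - 1) / (q + 1) - (q' - 1) / (q' + 1))\<^sup>2"
    by (simp add: norm_sq_vec3 inv_stereo_nth cmod_power2 u_v_u'_v'_def q_q'_def)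
  also have "\<dots> = (4 * (u * (1 + q') - u' * (1 + q))\<^sup>2 + 4 * (v * (1 + q') - v' * (1 + q))\<^sup>2 +
      (2 * q - 2 * q')\<^sup>2) / ((1 + q) * (1 + q'))\<^sup>2"
  proof -
    have differences:
      "2 * u / (1 + q) - 2 * u' / (1 + q') = 2 * (u * (1 + q') - u' * (1 + q)) / ((1 + q) * (1 + q'))"
      "2 * v / (1 + q) - 2 * v' / (1 + q') = 2 * (v * (1 + q') - v' * (1 + q)) / ((1 + q) * (1 + q'))"
      "(q - 1) / (q + 1) - (q' - 1) / (q' + 1) = (2 * q - 2 * q') / ((1 + q) * (1 + q'))"
      using nonzero by (simp_all add: field_simps)
    show ?thesis
      unfolding differences
      by (simp add: power_divide power_mult_distrib add_divide_distrib; simp add: power2_eq_square algebra_simps)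
  qed
  also have "4 * (u * (1 + q') - u' * (1 + q))\<^sup>2 + 4 * (v * (1 + q') - v' * (1 + q))\<^sup>2 + (2 * q - 2 * q')\<^sup>2 =
      4 * ((u - u')\<^sup>2 + (v - v')\<^sup>2) * ((1 + q) * (1 + q'))"
    unfolding q_q'_def by (simp add: power2_eq_square algebra_simps)
  also have "\<dots> / ((1 + q) * (1 + q'))\<^sup>2 = 4 * ((u - u')\<^sup>2 + (v - v')\<^sup>2) / ((1 + q) * (1 + q'))"
    using nonzero by (simp add: power2_eq_square)
  finally show ?thesis
    by (simp add: cmod_power2 u_v_u'_v'_def q_q'_def)
qed

lemma ln_norm_inv_stereo_diff:
  assumes "z \<noteq> w"
  shows "ln (norm (inv_stereo z - inv_stereo w)) =
    ln 2 + ln (cmod (z - w)) - ln (1 + (cmod z)\<^sup>2) / 2 - ln (1 + (cmod w)\<^sup>2) / 2"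
proof -
  have pos: "cmod (z - w) > 0" "1 + (cmod z)\<^sup>2 > 0" "1 + (cmod w)\<^sup>2 > 0"
    using assms by (auto intro: add_pos_nonneg)
  have "norm (inv_stereo z - inv_stereo w) > 0"
    using assms by (metis stereo_inv_stereo zero_less_norm_iff right_minus_eq)
  then have "2 * ln (norm (inv_stereo z - inv_stereo w)) = ln ((norm (inv_stereo z - inv_stereo w))\<^sup>2)"
    by (simp add: ln_realpow)
  also have "\<dots> = ln 4 + 2 * ln (cmod (z - w)) - ln (1 + (cmod z)\<^sup>2) - ln (1 + (cmod w)\<^sup>2)"
    using pos by (simp add: norm_inv_stereo_diff_sq ln_div ln_mult ln_realpow)
  also have "ln (4::real) = 2 * ln 2"
    using ln_realpow[of 2 2] by simp
  finally show ?thesis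
    by simp
qed

lemma log_energy_inv_stereo_image:
  fixes R :: "complex set"
  assumes R: "finite R"
  shows "log_energy (inv_stereo ` R) = - (\<Sum>z\<in>R. \<Sum>w\<in>R-{z}. ln (norm (inv_stereo z - inv_stereo w)))"
proof -
  define h where "h = (\<lambda>(z, w). (inv_stereo z, inv_stereo w))"
  have set: "{(x,y). x \<in> inv_stereo ` R \<and> y \<in> inv_stereo ` R \<and> x \<noteq> y} = h ` (Sigma R (\<lambda>z. R - {z}))"
  proof (intro equalityI subsetI)
    fix p assume "p \<in> {(x,y). x \<in> inv_stereo ` R \<and> y \<in> inv_stereo ` R \<and> x \<noteq> y}"
    then obtain z w where zw: "z \<in> R" "w \<in> R" "p = (inv_stereo z, inv_stereo w)" "inv_stereo z \<noteq> inv_stereo w" by auto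
    then have "z \<noteq> w" by auto
    then show "p \<in> h ` (Sigma R (\<lambda>z. R - {z}))" using zw unfolding h_def by force
  next
    fix p assume "p \<in> h ` (Sigma R (\<lambda>z. R - {z}))"
    then obtain z w where zw: "z \<in> R" "w \<in> R" "z \<noteq> w" "p = (inv_stereo z, inv_stereo w)" unfolding h_def by auto
    then have "inv_stereo z \<noteq> inv_stereo w" using inj_inv_stereo by (auto dest: injD)
    then show "p \<in> {(x,y). x \<in> inv_stereo ` R \<and> y \<in> inv_stereo ` R \<and> x \<noteq> y}" using zw by auto
  qed
  have inj: "inj_on h (Sigma R (\<lambda>z. R - {z}))"
    using inj_inv_stereo unfolding inj_on_def h_def by (auto dest: injD)
  have "log_energy (inv_stereo ` R) = - (\<Sum>(x,y)\<in>h ` (Sigma R (\<lambda>z. R - {z})). ln (norm (x - y)))"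
    unfolding log_energy_def set ..
  also have "(\<Sum>(x,y)\<in>h ` (Sigma R (\<lambda>z. R - {z})). ln (norm (x - y))) =
      (\<Sum>(z,w)\<in>Sigma R (\<lambda>z. R - {z}). ln (norm (inv_stereo z - inv_stereo w)))"
    by (subst sum.reindex[OF inj]) (simp add: h_def case_prod_beta' comp_def)
  also have "\<dots> = (\<Sum>z\<in>R. \<Sum>w\<in>R-{z}. ln (norm (inv_stereo z - inv_stereo w)))"
    using R by (subst sum.Sigma) auto
  finally show ?thesis .
qed

lemma bw_norm_ge_1:
  assumes "lead_coeff P = 1"
  shows "bw_norm P \<ge> 1"
proof -
  have "(1::real) = (cmod (coeff P (degree P)))\<^sup>2 / real (degree P choose degree P)"
    using assms by simp
  also have "\<dots> \<le> (\<Sum>i\<le>degree P. (cmod (coeff P i))\<^sup>2 / real (degree P choose i))"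
    by (rule member_le_sum) auto
  finally show ?thesis
    unfolding bw_norm_def by (simp add: real_le_rsqrt)
qed

lemma monic_simple_roots_eq_prod:
  fixes P :: "complex poly"
  assumes "lead_coeff P = 1" and "\<And>z. poly P z = 0 \<Longrightarrow> poly (pderiv P) z \<noteq> 0"
  shows "P = (\<Prod>z | poly P z = 0. [:-z, 1:])"
  using complex_poly_decompose_rsquarefree[of P] assms by (simp add: rsquarefree_roots)

lemma poly_pderiv_prod_linear_factors:
  fixes R :: "'a::idom set"
  assumes "finite R" "z \<in> R"
  shows "poly (pderiv (\<Prod>w\<in>R. [:-w, 1:])) z = (\<Prod>w\<in>R - {z}. z - w)"
proof -
  have "poly (pderiv (\<Prod>w\<in>R. [:-w, 1:])) z = (\<Sum>a\<in>R. \<Prod>w\<in>R - {a}. z - w)"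
    by (simp add: pderiv_prod poly_sum poly_prod pderiv_pCons)
  also have "\<dots> = (\<Prod>w\<in>R - {z}. z - w) + (\<Sum>a\<in>R - {z}. \<Prod>w\<in>R - {a}. z - w)"
    using assms by (simp add: sum.remove)
  also have "(\<Sum>a\<in>R - {z}. \<Prod>w\<in>R - {a}. z - w) = 0"
    using assms by (intro sum.neutral ballI prod_zero) auto
  finally show ?thesis
    by simp
qed

lemma sum_ln_norm_diff_eq_ln_pderiv:
  fixes R :: "complex set"
  assumes "finite R" "z \<in> R"
  shows "(\<Sum>w\<in>R - {z}. ln (cmod (z - w))) = ln (cmod (poly (pderiv (\<Prod>w\<in>R. [:-w, 1:])) z))"
proof -
  have "(\<Sum>w\<in>R - {z}. ln (cmod (z - w))) = ln (\<Prod>w\<in>R - {z}. cmod (z - w))"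
    using assms(1) by (subst ln_prod) auto
  then show ?thesis
    using assms by (simp add: poly_pderiv_prod_linear_factors prod_norm)
qed

lemma log_energy_inv_stereo_roots:
  fixes R :: "complex set"
  assumes "finite R" "R \<noteq> {}"
  defines "P \<equiv> \<Prod>z\<in>R. [:-z, 1:]" and "n \<equiv> card R"
  shows "log_energy (inv_stereo ` R) =
    (real n - 1) * (\<Sum>z\<in>R. ln (1 + (cmod z)\<^sup>2)) - (\<Sum>z\<in>R. ln (cmod (poly (pderiv P) z)))
      - real n * (real n - 1) * ln 2"
proof -
  define L where "L z = ln (1 + (cmod z)\<^sup>2)" for z
  have inner: "(\<Sum>w\<in>R - {z}. ln (norm (inv_stereo z - inv_stereo w))) =
      (real n - 1) * ln 2 + ln (cmod (poly (pderiv P) z)) - (real n / 2 - 1) * L z - sum L R / 2"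
    if "z \<in> R" for z
  proof -
    have "(\<Sum>w\<in>R - {z}. ln (norm (inv_stereo z - inv_stereo w))) =
        (\<Sum>w\<in>R - {z}. ln 2 + ln (cmod (z - w)) - L z / 2 - L w / 2)"
      by (intro sum.cong refl) (auto simp: ln_norm_inv_stereo_diff L_def)
    also have "\<dots> = real (card (R - {z})) * (ln 2 - L z / 2) + (\<Sum>w\<in>R - {z}. ln (cmod (z - w)))
        - (\<Sum>w\<in>R - {z}. L w) / 2"
      by (simp add: sum.distrib sum_subtractf sum_divide_distrib algebra_simps)
    also have "real (card (R - {z})) = real n - 1"
    proof -
      have "card R > 0"
        using assms(1) that card_gt_0_iff by blast
      then show ?thesis
        using assms(1) that by (simp add: n_def of_nat_diff)
    qed
    also have "(\<Sum>w\<in>R - {z}. ln (cmod (z - w))) = ln (cmod (poly (pderiv P) z))"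
      unfolding P_def using assms(1) that by (rule sum_ln_norm_diff_eq_ln_pderiv)
    also have "(\<Sum>w\<in>R - {z}. L w) = sum L R - L z"
      using assms(1) that by (simp add: sum_diff1)
    finally show ?thesis
      by (simp add: field_simps)
  qed
  have "log_energy (inv_stereo ` R) = - (\<Sum>z\<in>R.
      (real n - 1) * ln 2 + ln (cmod (poly (pderiv P) z)) - (real n / 2 - 1) * L z - sum L R / 2)"
    using inner by (simp add: log_energy_inv_stereo_image[OF assms(1)])
  also have "\<dots> = - (real n * (real n - 1) * ln 2 + (\<Sum>z\<in>R. ln (cmod (poly (pderiv P) z)))
      - (real n / 2 - 1) * sum L R - real n * (sum L R / 2))"
    by (simp add: sum.distrib sum_subtractf sum_distrib_left[symmetric] n_def)
  also have "\<dots> = (real n - 1) * sum L R - (\<Sum>z\<in>R. ln (cmod (poly (pderiv P) z))) - real n * (real n - 1) * ln 2"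
    by (simp add: algebra_simps)
  finally show ?thesis
    by (simp add: L_def)
qed

lemma ln_bound_if_mu_norm_at_le:
  assumes "mu_norm_at P z \<le> ereal B" "poly (pderiv P) z \<noteq> 0" "bw_norm P > 0" "degree P \<ge> 1"
  shows "ln (sqrt (real (degree P))) + ln (bw_norm P) + (real (degree P) / 2 - 1) * ln (1 + (cmod z)\<^sup>2)
    - ln (cmod (poly (pderiv P) z)) \<le> ln B"
proof -
  define m where "m = sqrt (real (degree P)) * bw_norm P * (1 + (cmod z)\<^sup>2) powr (real (degree P) / 2 - 1)
    / cmod (poly (pderiv P) z)"
  have "m \<le> B"
    using assms(1,2) by (simp add: mu_norm_at_def m_def)
  have "1 + (cmod z)\<^sup>2 > 0"
    by (simp add: add_pos_nonneg)
  then have pos: "sqrt (real (degree P)) > 0" "(1 + (cmod z)\<^sup>2) powr (real (degree P) / 2 - 1) > 0"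
    "cmod (poly (pderiv P) z) > 0" "1 + (cmod z)\<^sup>2 > 0"
    using assms(2,4) by auto
  then have "m > 0"
    using assms(3) by (simp add: m_def)
  then have "ln m \<le> ln B"
    using \<open>m \<le> B\<close> by simp
  moreover have "ln m = ln (sqrt (real (degree P))) + ln (bw_norm P)
      + (real (degree P) / 2 - 1) * ln (1 + (cmod z)\<^sup>2) - ln (cmod (poly (pderiv P) z))"
    using pos assms(3) by (simp add: m_def ln_div ln_mult ln_powr)
  ultimately show ?thesis
    by simp
qed

lemma mu_norm_at_le_if_mu_norm_le:
  assumes "mu_norm P \<le> ereal B" "poly P z = 0"
  shows "mu_norm_at P z \<le> ereal B" "poly (pderiv P) z \<noteq> 0"
proof -
  show "mu_norm_at P z \<le> ereal B"
    using assms unfolding mu_norm_def by (meson SUP_upper mem_Collect_eq order_trans)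
  then show "poly (pderiv P) z \<noteq> 0"
    by (auto simp: mu_norm_at_def)
qed

lemma log_energy_bound_arith:
  fixes N E SL SP bw B :: real
  assumes "N \<ge> 1"
    and energy: "E = (N - 1) * SL - SP - N * (N - 1) * ln 2"
    and condition: "N * (ln (sqrt N) + ln bw) + (N / 2 - 1) * SL - SP \<le> N * ln B"
    and spherical: "SL - N \<le> 2 * ln bw - ln (N + 1)"
  shows "E \<le> (1/2 - ln 2) * N\<^sup>2 - N * ln (sqrt (N * (N + 1)) / 2) + N * ln B"
proof -
  have ln_sqrt_prod: "ln (sqrt (N * (N + 1)) / 2) = ln N / 2 + ln (N + 1) / 2 - ln 2"
    and ln_sqrt_N: "ln (sqrt N) = ln N / 2"
    using assms(1) by (simp_all add: ln_div ln_sqrt ln_mult)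
  have "N / 2 * (SL - N) \<le> N / 2 * (2 * ln bw - ln (N + 1))"
    using spherical assms(1) by (intro mult_left_mono) auto
  then show ?thesis
    using energy condition unfolding ln_sqrt_prod ln_sqrt_N
    by (simp add: algebra_simps power2_eq_square) argo
qed

lemma log_energy_inv_stereo_roots_le:
  fixes P :: "complex poly"
  assumes monic: "lead_coeff P = 1" and deg: "degree P = N" "N \<ge> 1" and cond: "mu_norm P \<le> ereal B"
  shows "log_energy (inv_stereo ` {z. poly P z = 0})
    \<le> (1/2 - ln 2) * (real N)\<^sup>2 - real N * ln (sqrt (real N * (real N + 1)) / 2) + real N * ln B"
proof -
  define R where "R = {z. poly P z = 0}"
  note mu_le = mu_norm_at_le_if_mu_norm_le[OF cond]
  have "P \<noteq> 0"
    using monic by auto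
  then have R: "finite R" "P = (\<Prod>z\<in>R. [:-z, 1:])"
    using mu_le(2) poly_roots_finite[of P] monic_simple_roots_eq_prod[OF monic] by (auto simp: R_def)
  then have "card R = N" "R \<noteq> {}"
    using deg degree_prod_linear_factors[of R] by auto
  define SL SP bw where "SL = (\<Sum>z\<in>R. ln (1 + (cmod z)\<^sup>2))"
    and "SP = (\<Sum>z\<in>R. ln (cmod (poly (pderiv P) z)))" and "bw = bw_norm P"
  have "bw \<ge> 1"
    using bw_norm_ge_1[OF monic] by (simp add: bw_def)
  have "ln (sqrt (real N)) + ln bw + (real N / 2 - 1) * ln (1 + (cmod z)\<^sup>2)
      - ln (cmod (poly (pderiv P) z)) \<le> ln B" if "z \<in> R" for z
    using ln_bound_if_mu_norm_at_le[OF mu_le[of z]] that \<open>bw \<ge> 1\<close> deg by (simp add: R_def bw_def)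
  then have "(\<Sum>z\<in>R. ln (sqrt (real N)) + ln bw + (real N / 2 - 1) * ln (1 + (cmod z)\<^sup>2)
      - ln (cmod (poly (pderiv P) z))) \<le> (\<Sum>z\<in>R. ln B)"
    by (rule sum_mono)
  then have condition: "real N * (ln (sqrt (real N)) + ln bw) + (real N / 2 - 1) * SL - SP \<le> real N * ln B"
    by (simp add: sum.distrib sum_subtractf sum_distrib_left[symmetric] \<open>card R = N\<close> SL_def SP_def)
  have "(\<Sum>z\<in>R. ln (1 + (cmod z)\<^sup>2) - 1) \<le> ln (bw\<^sup>2 / (real N + 1))"
    using sum_ln_one_plus_norm_sq_le[OF R(1)] R(2) \<open>card R = N\<close> \<open>bw \<ge> 1\<close> by (simp add: bw_def)
  then have spherical: "SL - real N \<le> 2 * ln bw - ln (real N + 1)"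
    using \<open>bw \<ge> 1\<close> \<open>card R = N\<close> by (simp add: sum_subtractf SL_def ln_div ln_realpow)
  have "log_energy (inv_stereo ` R) = (real N - 1) * SL - SP - real N * (real N - 1) * ln 2"
    using log_energy_inv_stereo_roots[OF R(1) \<open>R \<noteq> {}\<close>] R(2) \<open>card R = N\<close>
    by (simp add: SL_def SP_def)
  from log_energy_bound_arith[OF _ this condition spherical] deg(2) show ?thesis
    by (simp add: R_def)
qed

theorem theorem3p2:
  fixes B :: "nat \<Rightarrow> real" and p :: "nat \<Rightarrow> complex poly"
  assumes Bpos: "\<And>N. B N > 0"
    and monic: "\<And>N. N \<ge> 1 \<Longrightarrow> lead_coeff (p N) = 1"
    and deg: "\<And>N. N \<ge> 1 \<Longrightarrow> degree (p N) = N"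
    and cond: "\<And>N. N \<ge> 1 \<Longrightarrow> mu_norm (p N) \<le> ereal (B N)"
    and N: "N \<ge> 1"
  shows "log_energy {x \<in> sphere 0 1. x \<noteq> north_pole \<and> poly (p N) (stereo x) = 0}
           \<le> (1/2 - ln 2) * (real N)^2 - real N * ln (sqrt (real N * (real N + 1)) / 2)
              + real N * ln (B N)"
  using log_energy_inv_stereo_roots_le[OF monic[OF N] deg[OF N] N cond[OF N]]
    sphere_stereo_preimage[of "{z. poly (p N) z = 0}"]
  by simp

end
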